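(* Let $G$ be a graph with $V(G)=\{v_1,\dots,v_n\}$, let $m\in\mathbb{N}$, let $d_1,\dots,d_n$ be nonnegative integers, and let $L$ be a list assignment for $G$ with $|L(v_i)|=m+d_i$ for each $i\in[n]$. Then \[P(G,L)\ge\left\lceil\frac{P_\ell(G,m)\prod_{i=1}^n(m+d_i)}{m^n}\right\rceil.\]
   Context: For a list assignment $L$ (a set $L(v)$ of colors for each vertex $v$), $P(G,L)$ is the number of proper colorings $f$ of $G$ with $f(v)\in L(v)$ for all $v$. An $m$-assignment has $|L(v)|=m$ for all $v$, and the list color function $P_\ell(G,m)$ is the minimum of $P(G,L)$ over all $m$-assignments $L$ for $G$. *)

theory Defs
  imports Complex_Main
begin

definition graph :: "'a set \<Rightarrow> ('a \<Rightarrow> 'a \<Rightarrow> bool) \<Rightarrow> bool" where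
  "graph V E \<longleftrightarrow> finite V \<and> (\<forall>u v. E u v \<longrightarrow> E v u) \<and> (\<forall>v. \<not> E v v)"

definition proper_L_colorings ::
  "'a set \<Rightarrow> ('a \<Rightarrow> 'a \<Rightarrow> bool) \<Rightarrow> ('a \<Rightarrow> 'c set) \<Rightarrow> ('a \<Rightarrow> 'c) set" where
  "proper_L_colorings V E L =
     {f. (\<forall>v\<in>V. f v \<in> L v) \<and> (\<forall>v. v \<notin> V \<longrightarrow> f v = undefined) \<and>
         (\<forall>u\<in>V. \<forall>v\<in>V. E u v \<longrightarrow> f u \<noteq> f v)}"

definition num_L_colorings :: "'a set \<Rightarrow> ('a \<Rightarrow> 'a \<Rightarrow> bool) \<Rightarrow> ('a \<Rightarrow> 'c set) \<Rightarrow> nat" where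
  "num_L_colorings V E L = card (proper_L_colorings V E L)"

definition m_assignment :: "'a set \<Rightarrow> nat \<Rightarrow> ('a \<Rightarrow> 'c set) \<Rightarrow> bool" where
  "m_assignment V m L \<longleftrightarrow> (\<forall>v\<in>V. finite (L v) \<and> card (L v) = m)"

text \<open>List color function P_l(G,m): minimum of P(G,L) over all m-assignments
  (colors taken from nat, which is w.l.o.g. since colors are mere labels).\<close>
definition list_color_function :: "'a set \<Rightarrow> ('a \<Rightarrow> 'a \<Rightarrow> bool) \<Rightarrow> nat \<Rightarrow> nat" where
  "list_color_function V E m =
     Inf {num_L_colorings V E L | L :: 'a \<Rightarrow> nat set. m_assignment V m L}"

end

theory Submission
  imports Defs "HOL-Library.FuncSet"
begin

text \<open>Deleting a color \<open>c\<close> from a list \<open>L(v)\<close> kills exactly the colorings with \<open>f(v) = c\<close>, so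
  over the \<open>|L(v)|\<close> possible deletions the counts of proper colorings sum to
  \<open>(|L(v)| - 1) P(G,L)\<close>. Hence \<open>P\<^sub>\<ell>(G,m) \<Prod>|L(v)| \<le> m\<^sup>n P(G,L)\<close> follows by induction on the
  total list size: when all lists have size \<open>m\<close> it is the definition of \<open>P\<^sub>\<ell>\<close>, and otherwise
  averaging the inductive bounds over the deletions at a vertex with \<open>|L(v)| > m \<ge> 1\<close> gives it.\<close>

lemma proper_L_colorings_remove_color:
  assumes "v \<in> V"
  shows "proper_L_colorings V E (L(v := L v - {c})) = {f \<in> proper_L_colorings V E L. f v \<noteq> c}"
  using assms unfolding proper_L_colorings_def by auto

lemma finite_proper_L_colorings:
  assumes "finite V" "\<forall>v\<in>V. finite (L v)"
  shows "finite (proper_L_colorings V E L)"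
proof (rule finite_subset)
  show "proper_L_colorings V E L \<subseteq> Pi\<^sub>E V L"
    unfolding proper_L_colorings_def PiE_def extensional_def by auto
  show "finite (Pi\<^sub>E V L)"
    using assms by (simp add: finite_PiE)
qed

lemma proper_L_colorings_relabel:
  assumes inj: "inj_on h (\<Union>v\<in>V. L v)"
  shows "proper_L_colorings V E (\<lambda>v. h ` L v) =
    (\<lambda>f. restrict (h \<circ> f) V) ` proper_L_colorings V E L"
proof
  let ?U = "\<Union>v\<in>V. L v"
  show "proper_L_colorings V E (\<lambda>v. h ` L v) \<subseteq> (\<lambda>f. restrict (h \<circ> f) V) ` proper_L_colorings V E L"
  proof
    fix g assume g: "g \<in> proper_L_colorings V E (\<lambda>v. h ` L v)"
    define f where "f = restrict (\<lambda>x. inv_into ?U h (g x)) V"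
    have f: "f x \<in> L x \<and> h (f x) = g x" if "x \<in> V" for x
    proof -
      obtain c where "c \<in> L x" "g x = h c"
        using g \<open>x \<in> V\<close> unfolding proper_L_colorings_def by auto
      moreover have "inv_into ?U h (h c) = c"
        using inj \<open>c \<in> L x\<close> \<open>x \<in> V\<close> by (intro inv_into_f_f) auto
      ultimately show ?thesis using \<open>x \<in> V\<close> unfolding f_def by simp
    qed
    have "f \<in> proper_L_colorings V E L"
      using g f unfolding proper_L_colorings_def by (auto simp: f_def) metis
    moreover have "g = restrict (h \<circ> f) V"
      using g f unfolding proper_L_colorings_def by (auto simp: restrict_def)
    ultimately show "g \<in> (\<lambda>f. restrict (h \<circ> f) V) ` proper_L_colorings V E L" by blast
  qed
  show "(\<lambda>f. restrict (h \<circ> f) V) ` proper_L_colorings V E L \<subseteq> proper_L_colorings V E (\<lambda>v. h ` L v)"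
    using inj unfolding proper_L_colorings_def by (auto 0 3 dest: inj_onD)
qed

lemma num_L_colorings_relabel:
  assumes inj: "inj_on h (\<Union>v\<in>V. L v)"
  shows "num_L_colorings V E (\<lambda>v. h ` L v) = num_L_colorings V E L"
proof -
  have "inj_on (\<lambda>f. restrict (h \<circ> f) V) (proper_L_colorings V E L)"
  proof (rule inj_onI)
    fix f g
    assume f: "f \<in> proper_L_colorings V E L" and g: "g \<in> proper_L_colorings V E L"
      and eq: "restrict (h \<circ> f) V = restrict (h \<circ> g) V"
    show "f = g"
    proof
      fix x
      show "f x = g x"
      proof (cases "x \<in> V")
        case True
        then have "h (f x) = h (g x)" "f x \<in> L x" "g x \<in> L x"
          using fun_cong[OF eq, of x] f g unfolding proper_L_colorings_def by auto
        then show ?thesis using inj \<open>x \<in> V\<close> by (auto dest: inj_onD)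
      next
        case False
        then show ?thesis using f g unfolding proper_L_colorings_def by auto
      qed
    qed
  qed
  then show ?thesis
    unfolding num_L_colorings_def proper_L_colorings_relabel[OF inj] by (rule card_image)
qed

text \<open>The list color function is defined with colors drawn from \<^typ>\<open>nat\<close>; any finite
  palette can be injected into \<^typ>\<open>nat\<close>, so it bounds \<open>P(G,L)\<close> for every color type.\<close>
lemma list_color_function_le_num_L_colorings:
  fixes L :: "'a \<Rightarrow> 'c set"
  assumes "finite V" "m_assignment V m L"
  shows "list_color_function V E m \<le> num_L_colorings V E L"
proof -
  have "finite (\<Union>v\<in>V. L v)"
    using assms unfolding m_assignment_def by auto
  then obtain h :: "'c \<Rightarrow> nat" where inj: "inj_on h (\<Union>v\<in>V. L v)"
    using finite_imp_inj_to_nat_seg by blast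
  have "m_assignment V m (\<lambda>v. h ` L v)"
    using assms(2) inj unfolding m_assignment_def
    by (metis (no_types, lifting) UN_upper card_image finite_imageI inj_on_subset)
  then have "list_color_function V E m \<le> num_L_colorings V E (\<lambda>v. h ` L v)"
    unfolding list_color_function_def by (intro cInf_lower) auto
  then show ?thesis
    unfolding num_L_colorings_relabel[OF inj] .
qed

text \<open>Double counting the pairs \<open>(c, f)\<close> with \<open>f\<close> a proper coloring and \<open>c \<in> L v - {f v}\<close>.\<close>
lemma sum_num_L_colorings_remove_color:
  assumes "finite V" "\<forall>u\<in>V. finite (L u)" "v \<in> V"
  shows "(\<Sum>c\<in>L v. num_L_colorings V E (L(v := L v - {c}))) =
    (card (L v) - 1) * num_L_colorings V E L"
proof -
  let ?P = "proper_L_colorings V E L"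
  have "\<forall>f\<in>?P. card {c \<in> L v. f v \<noteq> c} = card (L v) - 1"
  proof
    fix f assume "f \<in> ?P"
    then have "f v \<in> L v"
      using \<open>v \<in> V\<close> unfolding proper_L_colorings_def by auto
    moreover have "{c \<in> L v. f v \<noteq> c} = L v - {f v}" by auto
    ultimately show "card {c \<in> L v. f v \<noteq> c} = card (L v) - 1"
      using assms by simp
  qed
  then have "(\<Sum>c\<in>L v. card {f \<in> ?P. f v \<noteq> c}) = (card (L v) - 1) * card ?P"
    using assms by (intro sum_multicount finite_proper_L_colorings) auto
  then show ?thesis
    unfolding num_L_colorings_def proper_L_colorings_remove_color[OF \<open>v \<in> V\<close>] .
qed

lemma prod_card_fun_upd:
  assumes "finite V" "v \<in> V"
  shows "(\<Prod>u\<in>V. card ((L(v := X)) u)) = card X * (\<Prod>u\<in>V - {v}. card (L u))"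
proof -
  have "(\<Prod>u\<in>V - {v}. card ((L(v := X)) u)) = (\<Prod>u\<in>V - {v}. card (L u))"
    by (intro prod.cong) auto
  then show ?thesis
    using prod.remove[OF assms, of "\<lambda>u. card ((L(v := X)) u)"] by simp
qed

text \<open>Summed over the \<open>|L(v)|\<close> deletions, both sides of the hypothesis become \<open>|L(v)| - 1\<close>
  times the corresponding sides of the conclusion.\<close>
lemma num_L_colorings_bound_from_deletions:
  fixes a b :: nat
  assumes "finite V" "\<forall>u\<in>V. finite (L u)" "v \<in> V" "2 \<le> card (L v)"
    and deletion_bound: "\<And>c. c \<in> L v \<Longrightarrow>
      a * (\<Prod>u\<in>V. card ((L(v := L v - {c})) u)) \<le> num_L_colorings V E (L(v := L v - {c})) * b"
  shows "a * (\<Prod>u\<in>V. card (L u)) \<le> num_L_colorings V E L * b"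
proof -
  define k where "k = card (L v)"
  define R where "R = (\<Prod>u\<in>V - {v}. card (L u))"
  have fin: "finite (L v)" using assms by auto
  have "(k - 1) * (a * (k * R)) = (\<Sum>c\<in>L v. a * ((k - 1) * R))"
    by (simp add: k_def)
  also have "\<dots> \<le> (\<Sum>c\<in>L v. num_L_colorings V E (L(v := L v - {c})) * b)"
  proof (rule sum_mono)
    fix c assume "c \<in> L v"
    then have "(\<Prod>u\<in>V. card ((L(v := L v - {c})) u)) = (k - 1) * R"
      using fin prod_card_fun_upd[OF assms(1,3), of L "L v - {c}"] by (simp add: k_def R_def)
    then show "a * ((k - 1) * R) \<le> num_L_colorings V E (L(v := L v - {c})) * b"
      using deletion_bound[OF \<open>c \<in> L v\<close>] by simp
  qed
  also have "\<dots> = (k - 1) * (num_L_colorings V E L * b)"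
    using sum_num_L_colorings_remove_color[OF assms(1-3)]
    by (simp add: k_def flip: sum_distrib_right)
  finally have "a * (k * R) \<le> num_L_colorings V E L * b"
    using assms(4) by (simp add: k_def)
  moreover have "(\<Prod>u\<in>V. card (L u)) = k * R"
    using prod.remove[OF assms(1,3)] by (simp add: k_def R_def)
  ultimately show ?thesis by simp
qed

lemma list_color_function_mult_prod_card_le:
  fixes L :: "'a \<Rightarrow> 'c set"
  assumes "finite V" "0 < m" "\<forall>v\<in>V. finite (L v) \<and> m \<le> card (L v)"
  shows "list_color_function V E m * (\<Prod>v\<in>V. card (L v)) \<le> num_L_colorings V E L * m ^ card V"
  using assms(3)
proof (induction "\<Sum>v\<in>V. card (L v)" arbitrary: L rule: less_induct)
  case less
  show ?case
  proof (cases "\<forall>v\<in>V. card (L v) = m")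
    case True
    then have "m_assignment V m L" "(\<Prod>v\<in>V. card (L v)) = m ^ card V"
      using less.prems by (auto simp: m_assignment_def)
    then show ?thesis
      by (simp add: list_color_function_le_num_L_colorings[OF assms(1)])
  next
    case False
    then obtain v where v: "v \<in> V" "m < card (L v)"
      using less.prems by force
    show ?thesis
    proof (rule num_L_colorings_bound_from_deletions[OF assms(1) _ v(1)])
      fix c assume "c \<in> L v"
      let ?Lc = "L(v := L v - {c})"
      have card_Lc: "card (?Lc v) = card (L v) - 1"
        using less.prems \<open>c \<in> L v\<close> v by auto
      have "(\<Sum>u\<in>V. card (?Lc u)) < (\<Sum>u\<in>V. card (L u))"
        using card_Lc v assms(1) by (intro sum_strict_mono_ex1) auto
      moreover have "\<forall>u\<in>V. finite (?Lc u) \<and> m \<le> card (?Lc u)"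
        using less.prems card_Lc v by auto
      ultimately show "list_color_function V E m * (\<Prod>u\<in>V. card (?Lc u)) \<le>
          num_L_colorings V E ?Lc * m ^ card V"
        by (rule less.hyps)
    qed (use less.prems v assms(2) in auto)
  qed
qed

theorem lemma25:
  fixes V :: "'a set" and E :: "'a \<Rightarrow> 'a \<Rightarrow> bool" and m :: nat
    and d :: "'a \<Rightarrow> nat" and L :: "'a \<Rightarrow> 'c set"
  assumes "graph V E"
    and "\<forall>v\<in>V. finite (L v) \<and> card (L v) = m + d v"
  shows "real (num_L_colorings V E L) \<ge>
    of_int \<lceil>(real (list_color_function V E m) * (\<Prod>v\<in>V. real (m + d v)))
              / real m ^ card V\<rceil>"
proof -
  have fin: "finite V" using assms(1) unfolding graph_def by simp
  consider "V = {}" | "V \<noteq> {}" "m = 0" | "0 < m" by blast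
  then have "(real (list_color_function V E m) * (\<Prod>v\<in>V. real (m + d v))) / real m ^ card V
      \<le> real (num_L_colorings V E L)" (is "?bound \<le> _")
  proof cases
    case 1
    then have "m_assignment V m L" by (simp add: m_assignment_def)
    with 1 show ?thesis using list_color_function_le_num_L_colorings[OF fin] by simp
  next
    case 2
    then have "card V \<noteq> 0" using fin by simp
    with 2 show ?thesis by (simp add: power_0_left)
  next
    case 3
    have "list_color_function V E m * (\<Prod>v\<in>V. m + d v) \<le> num_L_colorings V E L * m ^ card V"
      using list_color_function_mult_prod_card_le[OF fin 3, of L E] assms(2) by simp
    then have "real (list_color_function V E m * (\<Prod>v\<in>V. m + d v))
        \<le> real (num_L_colorings V E L * m ^ card V)"
      by (rule of_nat_mono)
    with 3 show ?thesis by (simp add: divide_le_eq)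
  qed
  then have "\<lceil>?bound\<rceil> \<le> int (num_L_colorings V E L)"
    by (simp add: ceiling_le)
  then show ?thesis by linarith
qed

end
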